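(* Let $1\le N\le3$, $a,c>0$, $1\le q<2$, $2+\frac8N<p<2^*$, and let $h\in L^{\frac{p}{p-q}}(\mathbb{R}^N)\cap C^1(\mathbb{R}^N)$ with $h\ge0$ and $\langle\nabla h,x\rangle\in L^{\frac{2}{2-q}}(\mathbb{R}^N)$. Assume $$\|h\|_{\frac{p}{p-q}}<\frac{aq(p\gamma_p-2)}{2\mathcal{C}_{N,p}^{q}\gamma_p(p-q)}\left(\frac{ap(2-q\gamma_p)}{2\gamma_p(p-q)\mathcal{C}_{N,p}^{p}}\right)^{\frac{2-q\gamma_p}{p\gamma_p-2}}c^{-\frac{(1-\gamma_p)(p-q)}{p\gamma_p-2}}.$$ Define $\varphi:(0,\infty)\to\mathbb{R}$ by $$\varphi(t):=\frac a2t^2-\frac1p\mathcal{C}_{N,p}^pc^{\frac{p-p\gamma_p}{2}}t^{p\gamma_p}-\frac1q\mathcal{C}_{N,p}^qc^{\frac{q(1-\gamma_p)}{2}}\|h\|_{\frac{p}{p-q}}t^{q\gamma_p}.$$ Then $\varphi$ has a local strict minimum at a negative level and a global strict maximum at a positive level. Moreover, there exist $0<R_1<R_2$, depending on $c$, such that $\varphi(R_1)=0=\varphi(R_2)$ and $\varphi(t)>0$ if and only if $t\in(R_1,R_2)$.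
   Context: $2^*=6$ if $N=3$, $2^*=+\infty$ if $N=1,2$. $\gamma_p:=\frac{N(p-2)}{2p}$, and $\mathcal{C}_{N,p}$ is the constant in the Gagliardo–Nirenberg inequality $\|u\|_p\le\mathcal{C}_{N,p}\|\nabla u\|_2^{\gamma_p}\|u\|_2^{1-\gamma_p}$ on $H^1(\mathbb{R}^N)$. *)

theory Defs
  imports "HOL-Analysis.Analysis"
begin

definition in_Lp :: "real \<Rightarrow> ('a::euclidean_space \<Rightarrow> real) \<Rightarrow> bool" where
  "in_Lp r f \<longleftrightarrow> f \<in> borel_measurable lborel \<and> integrable lborel (\<lambda>x. \<bar>f x\<bar> powr r)"

definition Lp_norm :: "real \<Rightarrow> ('a::euclidean_space \<Rightarrow> real) \<Rightarrow> real" where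
  "Lp_norm r f = (\<integral>x. \<bar>f x\<bar> powr r \<partial>lborel) powr (1 / r)"

definition C1c_grad :: "('a::euclidean_space \<Rightarrow> real) \<Rightarrow> ('a \<Rightarrow> 'a) \<Rightarrow> bool" where
  "C1c_grad \<phi> g \<longleftrightarrow> continuous_on UNIV g \<and>
     (\<forall>x. (\<phi> has_derivative (\<lambda>v. g x \<bullet> v)) (at x)) \<and>
     compact (closure {x. \<phi> x \<noteq> 0})"

definition H1_weak_grad :: "('a::euclidean_space \<Rightarrow> real) \<Rightarrow> ('a \<Rightarrow> 'a) \<Rightarrow> bool" where
  "H1_weak_grad u g \<longleftrightarrow> in_Lp 2 u \<and> g \<in> borel_measurable lborel \<and>
     (\<forall>i\<in>Basis. in_Lp 2 (\<lambda>x. g x \<bullet> i)) \<and>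
     (\<forall>\<phi> d\<phi>. C1c_grad \<phi> d\<phi> \<longrightarrow>
        (\<forall>i\<in>Basis. (\<integral>x. u x * (d\<phi> x \<bullet> i) \<partial>lborel) = - (\<integral>x. (g x \<bullet> i) * \<phi> x \<partial>lborel)))"

definition gamma_p :: "nat \<Rightarrow> real \<Rightarrow> real" where
  "gamma_p N p = real N * (p - 2) / (2 * p)"

definition GN_const :: "'n::finite itself \<Rightarrow> real \<Rightarrow> real" where
  "GN_const _ p = Inf {C. C \<ge> 0 \<and>
     (\<forall>(u :: real^'n \<Rightarrow> real) g. H1_weak_grad u g \<longrightarrow>
        Lp_norm p u \<le> C * Lp_norm 2 (\<lambda>x. norm (g x)) powr (gamma_p CARD('n) p)
                         * Lp_norm 2 u powr (1 - gamma_p CARD('n) p))}"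

end

theory Submission
  imports Defs "HOL-Real_Asymp.Real_Asymp"
begin

text \<open>With \<alpha> = p \<gamma>_p and \<beta> = q \<gamma>_p we have 0 < \<beta> < 2 < \<alpha>, and
  \<phi>(t) = A t^2 - B t^\<alpha> - D t^\<beta> = t^\<beta> (g(t) - D) with g(t) = A t^(2-\<beta>) - B t^(\<alpha>-\<beta>).
  Since 0 < 2 - \<beta> < \<alpha> - \<beta>, g first increases and then decreases, and the smallness
  assumption on the norm of h says exactly that D lies below the maximum of g; so \<phi> > 0
  precisely on an interval (R1, R2). Likewise \<phi>'(t) = t^(\<beta>-1) (k(t) - \<beta> D) with k of the
  same unimodal shape. As \<phi> rises from negative values to 0 before R1, k exceeds \<beta> D
  somewhere, so \<phi>' is negative, positive, negative on (0, s1), (s1, s2), (s2, \<infinity>): the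
  turning points s1 and s2 are a negative strict local minimum and a positive strict
  global maximum.\<close>

lemma unimodal_superlevel_set:
  fixes u :: "real \<Rightarrow> real"
  assumes cont: "continuous_on {0<..} u"
    and inc: "\<And>x y. 0 < x \<Longrightarrow> x < y \<Longrightarrow> y \<le> m \<Longrightarrow> u x < u y"
    and dec: "\<And>x y. m \<le> x \<Longrightarrow> x < y \<Longrightarrow> u y < u x"
    and a: "0 < a" "a < m" "u a < L"
    and b: "m < b" "u b < L"
    and peak: "L < u m"
  obtains r1 r2 where "0 < r1" "r1 < r2" "u r1 = L" "u r2 = L"
    "\<And>t. 0 < t \<Longrightarrow> L < u t \<longleftrightarrow> r1 < t \<and> t < r2"
    "\<And>t. 0 < t \<Longrightarrow> u t < L \<longleftrightarrow> t < r1 \<or> r2 < t"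
proof -
  have cont_on: "continuous_on {x..y} u" if "0 < x" for x y
    using cont by (rule continuous_on_subset) (use that in auto)
  obtain r1 where r1: "a \<le> r1" "r1 \<le> m" "u r1 = L"
    using IVT'[of u a L m] a peak cont_on[OF \<open>0 < a\<close>] by auto
  obtain r2 where r2: "m \<le> r2" "r2 \<le> b" "u r2 = L"
    using IVT2'[of u b L m] a b peak cont_on[of m b] by auto
  have "r1 < m" "m < r2"
    using r1 r2 peak by (metis order_less_le order_less_irrefl)+
  have "0 < r1" using a r1 by linarith
  have below_r1: "u t < L" if "0 < t" "t < r1" for t
    using inc[OF that \<open>r1 \<le> m\<close>] r1 by simp
  have above_r2: "u t < L" if "r2 < t" for t
    using dec[OF \<open>m \<le> r2\<close> that] r2 by simp
  have between: "L < u t" if "r1 < t" "t < r2" for t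
  proof (cases "t \<le> m")
    case True
    then show ?thesis using inc[OF \<open>0 < r1\<close> \<open>r1 < t\<close>] r1 by simp
  next
    case False
    then show ?thesis using dec[of t r2] \<open>t < r2\<close> r2 by simp
  qed
  show thesis
  proof (rule that[OF \<open>0 < r1\<close> _ r1(3) r2(3)])
    show "r1 < r2" using \<open>r1 < m\<close> \<open>m < r2\<close> by simp
    fix t :: real assume "0 < t"
    then show "L < u t \<longleftrightarrow> r1 < t \<and> t < r2" "u t < L \<longleftrightarrow> t < r1 \<or> r2 < t"
      using below_r1 above_r2 between r1(3) r2(3) \<open>r1 < m\<close> \<open>m < r2\<close>
      by (metis linorder_neqE_linordered_idom order_less_asym)+
  qed
qed

lemma powr_diff_unimodal:
  fixes P Q \<mu> \<nu> :: real
  assumes P: "0 < P" and Q: "0 < Q" and \<mu>: "0 < \<mu>" "\<mu> < \<nu>"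
  defines "u \<equiv> \<lambda>t. P * t powr \<mu> - Q * t powr \<nu>"
    and "m \<equiv> (\<mu> * P / (\<nu> * Q)) powr (1 / (\<nu> - \<mu>))"
  shows "0 < m"
    and "\<And>x y. 0 < x \<Longrightarrow> x < y \<Longrightarrow> y \<le> m \<Longrightarrow> u x < u y"
    and "\<And>x y. m \<le> x \<Longrightarrow> x < y \<Longrightarrow> u y < u x"
    and "u m = (\<nu> - \<mu>) / \<nu> * P * (\<mu> * P / (\<nu> * Q)) powr (\<mu> / (\<nu> - \<mu>))"
proof -
  define r where "r = \<mu> * P / (\<nu> * Q)"
  have "0 < r" unfolding r_def using P Q \<mu> by simp
  then show "0 < m" unfolding m_def r_def[symmetric] by simp
  have m_power: "m powr (\<nu> - \<mu>) = r"
    unfolding m_def r_def[symmetric] using \<open>0 < r\<close> \<mu> by (simp add: powr_powr)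
  have split_powr: "t powr \<nu> = t powr \<mu> * t powr (\<nu> - \<mu>)" if "0 < t" for t
    using that by (simp add: powr_add[symmetric])
  have deriv: "(u has_real_derivative z powr (\<mu> - 1) * (\<nu> * Q) * (m powr (\<nu> - \<mu>) - z powr (\<nu> - \<mu>))) (at z)"
    if "0 < z" for z
  proof -
    have "(u has_real_derivative P * (\<mu> * z powr (\<mu> - 1)) - Q * (\<nu> * z powr (\<nu> - 1))) (at z)"
      unfolding u_def by (intro DERIV_diff DERIV_cmult has_real_derivative_powr that)
    moreover have "z powr (\<nu> - 1) = z powr (\<mu> - 1) * z powr (\<nu> - \<mu>)"
      using that by (simp add: powr_add[symmetric])
    then have "P * (\<mu> * z powr (\<mu> - 1)) - Q * (\<nu> * z powr (\<nu> - 1))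
        = z powr (\<mu> - 1) * (\<nu> * Q) * (m powr (\<nu> - \<mu>) - z powr (\<nu> - \<mu>))"
      unfolding m_power r_def using Q \<mu> by (simp add: field_simps)
    ultimately show ?thesis by simp
  qed
  have cont: "continuous_on {x..y} u" if "0 < x" for x y
    unfolding u_def using \<mu> that by (intro continuous_intros) auto
  show "u x < u y" if "0 < x" "x < y" "y \<le> m" for x y
  proof (rule DERIV_pos_imp_increasing_open[OF \<open>x < y\<close> _ cont[OF \<open>0 < x\<close>]])
    fix z assume z: "x < z" "z < y"
    then have "z powr (\<nu> - \<mu>) < m powr (\<nu> - \<mu>)"
      using that \<mu> by (intro powr_less_mono2) auto
    then have "0 < z powr (\<mu> - 1) * (\<nu> * Q) * (m powr (\<nu> - \<mu>) - z powr (\<nu> - \<mu>))"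
      using Q \<mu> \<open>0 < x\<close> \<open>x < z\<close> by simp
    with deriv z that show "\<exists>d. (u has_real_derivative d) (at z) \<and> 0 < d"
      by (meson order_less_trans)
  qed
  show "u y < u x" if "m \<le> x" "x < y" for x y
  proof (rule DERIV_neg_imp_decreasing_open[OF \<open>x < y\<close> _ cont])
    show "0 < x" using \<open>0 < m\<close> that by linarith
    fix z assume z: "x < z" "z < y"
    then have "m powr (\<nu> - \<mu>) < z powr (\<nu> - \<mu>)"
      using that \<mu> \<open>0 < m\<close> by (intro powr_less_mono2) auto
    then have "z powr (\<mu> - 1) * (\<nu> * Q) * (m powr (\<nu> - \<mu>) - z powr (\<nu> - \<mu>)) < 0"
      using Q \<mu> \<open>0 < x\<close> \<open>x < z\<close> by (simp add: mult_pos_neg)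
    with deriv z \<open>0 < x\<close> show "\<exists>d. (u has_real_derivative d) (at z) \<and> d < 0"
      by (meson order_less_trans)
  qed
  have "u m = P * m powr \<mu> * (1 - \<mu> / \<nu>)"
    unfolding u_def split_powr[OF \<open>0 < m\<close>] m_power using Q \<mu> by (simp add: r_def field_simps)
  also have "m powr \<mu> = r powr (\<mu> / (\<nu> - \<mu>))"
    unfolding m_def r_def[symmetric] using \<open>0 < r\<close> by (simp add: powr_powr)
  finally show "u m = (\<nu> - \<mu>) / \<nu> * P * (\<mu> * P / (\<nu> * Q)) powr (\<mu> / (\<nu> - \<mu>))"
    unfolding r_def using \<mu> by (simp add: field_simps)
qed

lemma powr_diff_superlevel_set:
  fixes P Q \<mu> \<nu> L s :: real
  assumes P: "0 < P" and Q: "0 < Q" and \<mu>: "0 < \<mu>" "\<mu> < \<nu>" and L: "0 < L"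
    and s: "0 < s" "L < P * s powr \<mu> - Q * s powr \<nu>"
  obtains r1 r2 where "0 < r1" "r1 < r2"
    "P * r1 powr \<mu> - Q * r1 powr \<nu> = L" "P * r2 powr \<mu> - Q * r2 powr \<nu> = L"
    "\<And>t. 0 < t \<Longrightarrow> L < P * t powr \<mu> - Q * t powr \<nu> \<longleftrightarrow> r1 < t \<and> t < r2"
    "\<And>t. 0 < t \<Longrightarrow> P * t powr \<mu> - Q * t powr \<nu> < L \<longleftrightarrow> t < r1 \<or> r2 < t"
proof -
  define u where "u = (\<lambda>t::real. P * t powr \<mu> - Q * t powr \<nu>)"
  define m where "m = (\<mu> * P / (\<nu> * Q)) powr (1 / (\<nu> - \<mu>))"
  note shape = powr_diff_unimodal[OF P Q \<mu>, folded m_def]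
  have inc: "u x < u y" if "0 < x" "x < y" "y \<le> m" for x y
    unfolding u_def using shape(2) that .
  have dec: "u y < u x" if "m \<le> x" "x < y" for x y
    unfolding u_def using shape(3) that .
  have "L < u m"
    using inc[of s m] dec[of m s] s unfolding u_def by (cases s m rule: linorder_cases) auto
  have "(u \<longlongrightarrow> 0) (at_right 0)"
    unfolding u_def using \<mu> by real_asymp
  then have "\<forall>\<^sub>F t in at_right 0. 0 < t \<and> t < m \<and> u t < L"
    using eventually_at_right_less order_tendstoD(2)[OF tendsto_ident_at shape(1)]
      order_tendstoD(2)[OF _ L] by (intro eventually_conj) auto
  then obtain a where a: "0 < a" "a < m" "u a < L"
    using eventually_happens'[OF trivial_limit_at_right_real] by blast
  have "filterlim u at_bot at_top"
    unfolding u_def using P Q \<mu> by real_asymp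
  then have "\<forall>\<^sub>F t in at_top. m < t \<and> u t < L"
    by (auto intro: eventually_conj eventually_gt_at_top simp: filterlim_at_bot_dense)
  then obtain b where b: "m < b" "u b < L"
    using eventually_happens'[OF trivial_limit_at_top_linorder] by blast
  have "continuous_on {0<..} u"
    unfolding u_def using \<mu> by (intro continuous_intros) auto
  from unimodal_superlevel_set[OF this inc dec a b \<open>L < u m\<close>] that
  show thesis unfolding u_def by blast
qed

lemma decreasing_increasing_decreasing_by_deriv:
  fixes f f' :: "real \<Rightarrow> real" and s1 s2 :: real
  assumes deriv: "\<And>t. 0 < t \<Longrightarrow> (f has_real_derivative f' t) (at t)"
    and "0 < s1" "s1 < s2"
    and neg: "\<And>t. 0 < t \<Longrightarrow> t < s1 \<or> s2 < t \<Longrightarrow> f' t < 0"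
    and pos: "\<And>t. s1 < t \<Longrightarrow> t < s2 \<Longrightarrow> 0 < f' t"
  shows "\<And>x y. 0 < x \<Longrightarrow> x < y \<Longrightarrow> y \<le> s1 \<Longrightarrow> f y < f x"
    and "\<And>x y. s1 \<le> x \<Longrightarrow> x < y \<Longrightarrow> y \<le> s2 \<Longrightarrow> f x < f y"
    and "\<And>x y. s2 \<le> x \<Longrightarrow> x < y \<Longrightarrow> f y < f x"
proof -
  have cont: "continuous_on {x..y} f" if "0 < x" for x y
  proof (rule DERIV_continuous_on[where D = f'])
    fix z assume "z \<in> {x..y}"
    with that have "0 < z" by simp
    then show "(f has_field_derivative f' z) (at z within {x..y})"
      by (rule has_field_derivative_at_within[OF deriv])
  qed
  show "f y < f x" if "0 < x" "x < y" "y \<le> s1" for x y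
  proof (rule DERIV_neg_imp_decreasing_open[OF \<open>x < y\<close> _ cont[OF \<open>0 < x\<close>]])
    fix z assume "x < z" "z < y"
    with that show "\<exists>d. (f has_real_derivative d) (at z) \<and> d < 0"
      using deriv neg by (meson less_le_trans order.strict_trans)
  qed
  show "f x < f y" if "s1 \<le> x" "x < y" "y \<le> s2" for x y
  proof (rule DERIV_pos_imp_increasing_open[OF \<open>x < y\<close> _ cont])
    show "0 < x" using that \<open>0 < s1\<close> by linarith
    fix z assume "x < z" "z < y"
    with that \<open>0 < x\<close> show "\<exists>d. (f has_real_derivative d) (at z) \<and> 0 < d"
      using deriv pos by (meson le_less_trans less_le_trans order.strict_trans)
  qed
  show "f y < f x" if "s2 \<le> x" "x < y" for x y
  proof (rule DERIV_neg_imp_decreasing_open[OF \<open>x < y\<close> _ cont])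
    show "0 < x" using that \<open>0 < s1\<close> \<open>s1 < s2\<close> by linarith
    fix z assume "x < z" "z < y"
    with that \<open>0 < x\<close> show "\<exists>d. (f has_real_derivative d) (at z) \<and> d < 0"
      using deriv neg by (meson le_less_trans order.strict_trans)
  qed
qed

lemma decreasing_increasing_decreasing_extrema:
  fixes f :: "real \<Rightarrow> real" and s1 s2 R T :: real
  assumes "0 < s1" "s1 < s2"
    and dec1: "\<And>x y. 0 < x \<Longrightarrow> x < y \<Longrightarrow> y \<le> s1 \<Longrightarrow> f y < f x"
    and inc: "\<And>x y. s1 \<le> x \<Longrightarrow> x < y \<Longrightarrow> y \<le> s2 \<Longrightarrow> f x < f y"
    and dec2: "\<And>x y. s2 \<le> x \<Longrightarrow> x < y \<Longrightarrow> f y < f x"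
    and neg: "0 < R" "\<And>t. 0 < t \<Longrightarrow> t < R \<Longrightarrow> f t < 0"
    and pos: "0 < T" "0 < f T"
  shows "f s1 < 0" "\<forall>t. 0 < t \<and> \<bar>t - s1\<bar> < s2 - s1 \<and> t \<noteq> s1 \<longrightarrow> f s1 < f t"
    and "0 < f s2" "\<forall>t>0. t \<noteq> s2 \<longrightarrow> f t < f s2"
proof -
  have neg_until_s1: "f t < 0" if "0 < t" "t \<le> s1" for t
  proof -
    define t' where "t' = min t R / 2"
    have "0 < t'" "t' < t" "t' < R" using that neg(1) unfolding t'_def by auto
    then show ?thesis using dec1[of t' t] neg(2)[of t'] that by auto
  qed
  then show "f s1 < 0" using \<open>0 < s1\<close> by simp
  show "\<forall>t. 0 < t \<and> \<bar>t - s1\<bar> < s2 - s1 \<and> t \<noteq> s1 \<longrightarrow> f s1 < f t"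
  proof (intro allI impI)
    fix t :: real assume t: "0 < t \<and> \<bar>t - s1\<bar> < s2 - s1 \<and> t \<noteq> s1"
    then show "f s1 < f t"
      using dec1[of t s1] inc[of s1 t] by (cases "t < s1") auto
  qed
  have le_s2: "f t \<le> f s2" if "s1 \<le> t" for t
    using inc[of t s2] dec2[of s2 t] that by (cases t s2 rule: linorder_cases) auto
  have "s1 < T" using neg_until_s1[of T] pos by linarith
  then show "0 < f s2" using le_s2[of T] pos by simp
  show "\<forall>t>0. t \<noteq> s2 \<longrightarrow> f t < f s2"
  proof (intro allI impI)
    fix t :: real assume "0 < t" "t \<noteq> s2"
    show "f t < f s2"
    proof (cases "t \<le> s1")
      case True
      then show ?thesis using neg_until_s1[OF \<open>0 < t\<close>] \<open>0 < f s2\<close> by simp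
    next
      case False
      then show ?thesis using inc[of t s2] dec2[of s2 t] \<open>t \<noteq> s2\<close> by (cases t s2 rule: linorder_cases) auto
    qed
  qed
qed

definition powr_trinomial :: "real \<Rightarrow> real \<Rightarrow> real \<Rightarrow> real \<Rightarrow> real \<Rightarrow> real \<Rightarrow> real" where
  "powr_trinomial A B D \<alpha> \<beta> t = A * t\<^sup>2 - B * t powr \<alpha> - D * t powr \<beta>"

lemma powr_trinomial_factor:
  fixes A B D \<alpha> \<beta> t :: real
  assumes "0 < t"
  shows "powr_trinomial A B D \<alpha> \<beta> t
    = t powr \<beta> * (A * t powr (2 - \<beta>) - B * t powr (\<alpha> - \<beta>) - D)"
proof -
  have "t\<^sup>2 = t powr \<beta> * t powr (2 - \<beta>)" "t powr \<alpha> = t powr \<beta> * t powr (\<alpha> - \<beta>)"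
    using assms by (simp_all add: powr_add[symmetric])
  then show ?thesis unfolding powr_trinomial_def by (simp add: algebra_simps)
qed

lemma powr_trinomial_has_real_derivative:
  fixes A B D \<alpha> \<beta> t :: real
  assumes "0 < t"
  shows "(powr_trinomial A B D \<alpha> \<beta> has_real_derivative
    t powr (\<beta> - 1) * (2 * A * t powr (2 - \<beta>) - \<alpha> * B * t powr (\<alpha> - \<beta>) - \<beta> * D)) (at t)"
proof -
  have "(powr_trinomial A B D \<alpha> \<beta> has_real_derivative
      A * (2 * t) - B * (\<alpha> * t powr (\<alpha> - 1)) - D * (\<beta> * t powr (\<beta> - 1))) (at t)"
    unfolding powr_trinomial_def[abs_def] using assms by (auto intro!: derivative_eq_intros)
  moreover have "t = t powr (\<beta> - 1) * t powr (2 - \<beta>)"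
    "t powr (\<alpha> - 1) = t powr (\<beta> - 1) * t powr (\<alpha> - \<beta>)"
    using assms by (simp_all add: powr_add[symmetric])
  ultimately show ?thesis by (simp add: algebra_simps)
qed

lemma powr_trinomial_sign:
  fixes A B D \<alpha> \<beta> :: real
  assumes A: "0 < A" and B: "0 < B" and D: "0 < D" and \<beta>: "0 < \<beta>" "\<beta> < 2" and \<alpha>: "2 < \<alpha>"
    and below_peak: "D < (\<alpha> - 2) / (\<alpha> - \<beta>) * A * ((2 - \<beta>) * A / ((\<alpha> - \<beta>) * B)) powr ((2 - \<beta>) / (\<alpha> - 2))"
  obtains R1 R2 where "0 < R1" "R1 < R2"
    "powr_trinomial A B D \<alpha> \<beta> R1 = 0" "powr_trinomial A B D \<alpha> \<beta> R2 = 0"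
    "\<And>t. 0 < t \<Longrightarrow> 0 < powr_trinomial A B D \<alpha> \<beta> t \<longleftrightarrow> R1 < t \<and> t < R2"
    "\<And>t. 0 < t \<Longrightarrow> t < R1 \<Longrightarrow> powr_trinomial A B D \<alpha> \<beta> t < 0"
proof -
  have exps: "0 < 2 - \<beta>" "2 - \<beta> < \<alpha> - \<beta>" using \<alpha> \<beta> by auto
  define m where "m = ((2 - \<beta>) * A / ((\<alpha> - \<beta>) * B)) powr (1 / ((\<alpha> - \<beta>) - (2 - \<beta>)))"
  have "0 < m" unfolding m_def by (rule powr_diff_unimodal(1)[OF A B exps])
  have "A * m powr (2 - \<beta>) - B * m powr (\<alpha> - \<beta>)
      = (\<alpha> - 2) / (\<alpha> - \<beta>) * A * ((2 - \<beta>) * A / ((\<alpha> - \<beta>) * B)) powr ((2 - \<beta>) / (\<alpha> - 2))"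
    unfolding m_def using powr_diff_unimodal(4)[OF A B exps] by simp
  with below_peak have below_g_peak: "D < A * m powr (2 - \<beta>) - B * m powr (\<alpha> - \<beta>)" by simp
  obtain R1 R2 where "0 < R1" "R1 < R2"
    and g_eq: "A * R1 powr (2 - \<beta>) - B * R1 powr (\<alpha> - \<beta>) = D"
      "A * R2 powr (2 - \<beta>) - B * R2 powr (\<alpha> - \<beta>) = D"
    and g_above: "\<And>t. 0 < t \<Longrightarrow> D < A * t powr (2 - \<beta>) - B * t powr (\<alpha> - \<beta>) \<longleftrightarrow> R1 < t \<and> t < R2"
    and g_below: "\<And>t. 0 < t \<Longrightarrow> A * t powr (2 - \<beta>) - B * t powr (\<alpha> - \<beta>) < D \<longleftrightarrow> t < R1 \<or> R2 < t"
    by (rule powr_diff_superlevel_set[OF A B exps D \<open>0 < m\<close> below_g_peak]) (rule that)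
  note factor = powr_trinomial_factor[of _ A B D \<alpha> \<beta>]
  show thesis
  proof (rule that[OF \<open>0 < R1\<close> \<open>R1 < R2\<close>])
    show "powr_trinomial A B D \<alpha> \<beta> R1 = 0" "powr_trinomial A B D \<alpha> \<beta> R2 = 0"
      using factor g_eq \<open>0 < R1\<close> \<open>R1 < R2\<close> by simp_all
    fix t :: real assume "0 < t"
    then show "0 < powr_trinomial A B D \<alpha> \<beta> t \<longleftrightarrow> R1 < t \<and> t < R2"
      using factor g_above by (simp add: zero_less_mult_iff)
    show "t < R1 \<Longrightarrow> powr_trinomial A B D \<alpha> \<beta> t < 0"
      using factor g_below \<open>0 < t\<close> by (simp add: mult_less_0_iff)
  qed
qed

lemma powr_trinomial_monotone:
  fixes A B D \<alpha> \<beta> :: real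
  assumes A: "0 < A" and B: "0 < B" and D: "0 < D" and \<beta>: "0 < \<beta>" "\<beta> < 2" and \<alpha>: "2 < \<alpha>"
    and below_peak: "D < (\<alpha> - 2) / (\<alpha> - \<beta>) * A * ((2 - \<beta>) * A / ((\<alpha> - \<beta>) * B)) powr ((2 - \<beta>) / (\<alpha> - 2))"
  defines "\<phi> \<equiv> powr_trinomial A B D \<alpha> \<beta>"
  obtains s1 s2 where "0 < s1" "s1 < s2"
    "\<And>x y. 0 < x \<Longrightarrow> x < y \<Longrightarrow> y \<le> s1 \<Longrightarrow> \<phi> y < \<phi> x"
    "\<And>x y. s1 \<le> x \<Longrightarrow> x < y \<Longrightarrow> y \<le> s2 \<Longrightarrow> \<phi> x < \<phi> y"
    "\<And>x y. s2 \<le> x \<Longrightarrow> x < y \<Longrightarrow> \<phi> y < \<phi> x"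
proof -
  obtain R1 where "0 < R1" "\<phi> R1 = 0" and \<phi>_neg: "\<And>t. 0 < t \<Longrightarrow> t < R1 \<Longrightarrow> \<phi> t < 0"
    using powr_trinomial_sign[OF A B D \<beta> \<alpha> below_peak, folded \<phi>_def] by metis
  define \<phi>' where "\<phi>' t = t powr (\<beta> - 1) * (2 * A * t powr (2 - \<beta>) - \<alpha> * B * t powr (\<alpha> - \<beta>) - \<beta> * D)" for t
  have \<phi>_deriv: "(\<phi> has_real_derivative \<phi>' t) (at t)" if "0 < t" for t
    unfolding \<phi>_def \<phi>'_def using that by (rule powr_trinomial_has_real_derivative)
  \<comment> \<open>\<phi> climbs from a negative value to 0 on [R1/2, R1], so \<phi>' is positive somewhere\<close>
  obtain z where z: "R1 / 2 < z" "z < R1" "\<phi> R1 - \<phi> (R1 / 2) = (R1 - R1 / 2) * \<phi>' z"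
    using MVT2[of "R1 / 2" R1 \<phi> \<phi>'] \<phi>_deriv \<open>0 < R1\<close> by auto
  have "0 < (R1 - R1 / 2) * \<phi>' z"
    using z(3) \<open>\<phi> R1 = 0\<close> \<phi>_neg[of "R1 / 2"] \<open>0 < R1\<close> by simp
  then have "0 < \<phi>' z"
    using \<open>0 < R1\<close> by (simp add: zero_less_mult_iff)
  then have k_z: "\<beta> * D < 2 * A * z powr (2 - \<beta>) - \<alpha> * B * z powr (\<alpha> - \<beta>)"
    unfolding \<phi>'_def using z \<open>0 < R1\<close> by (simp add: zero_less_mult_iff)
  have exps: "0 < 2 - \<beta>" "2 - \<beta> < \<alpha> - \<beta>" using \<alpha> \<beta> by auto
  have k_coeffs: "0 < 2 * A" "0 < \<alpha> * B" "0 < \<beta> * D" and "0 < z"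
    using A B D \<alpha> \<beta> z \<open>0 < R1\<close> by simp_all
  obtain s1 s2 where "0 < s1" "s1 < s2"
    and k_above: "\<And>t. 0 < t \<Longrightarrow> \<beta> * D < 2 * A * t powr (2 - \<beta>) - \<alpha> * B * t powr (\<alpha> - \<beta>) \<longleftrightarrow> s1 < t \<and> t < s2"
    and k_below: "\<And>t. 0 < t \<Longrightarrow> 2 * A * t powr (2 - \<beta>) - \<alpha> * B * t powr (\<alpha> - \<beta>) < \<beta> * D \<longleftrightarrow> t < s1 \<or> s2 < t"
    by (rule powr_diff_superlevel_set[OF k_coeffs(1,2) exps k_coeffs(3) \<open>0 < z\<close> k_z]) (rule that)
  have \<phi>'_neg: "\<phi>' t < 0" if "0 < t" "t < s1 \<or> s2 < t" for t
    unfolding \<phi>'_def using k_below[OF that(1)] that by (simp add: mult_pos_neg)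
  have \<phi>'_pos: "0 < \<phi>' t" if "s1 < t" "t < s2" for t
    unfolding \<phi>'_def using k_above[of t] that \<open>0 < s1\<close> by simp
  show thesis
    by (rule that[OF \<open>0 < s1\<close> \<open>s1 < s2\<close> decreasing_increasing_decreasing_by_deriv[where f = \<phi> and f' = \<phi>',
          OF \<phi>_deriv \<open>0 < s1\<close> \<open>s1 < s2\<close> \<phi>'_neg \<phi>'_pos]])
qed

lemma powr_trinomial_shape:
  fixes A B D \<alpha> \<beta> :: real
  assumes A: "0 < A" and B: "0 < B" and D: "0 < D" and \<beta>: "0 < \<beta>" "\<beta> < 2" and \<alpha>: "2 < \<alpha>"
    and below_peak: "D < (\<alpha> - 2) / (\<alpha> - \<beta>) * A * ((2 - \<beta>) * A / ((\<alpha> - \<beta>) * B)) powr ((2 - \<beta>) / (\<alpha> - 2))"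
  defines "\<phi> \<equiv> powr_trinomial A B D \<alpha> \<beta>"
  shows "(\<exists>t0>0. \<phi> t0 < 0 \<and> (\<exists>\<delta>>0. \<forall>t. t > 0 \<and> \<bar>t - t0\<bar> < \<delta> \<and> t \<noteq> t0 \<longrightarrow> \<phi> t > \<phi> t0))
       \<and> (\<exists>t1>0. \<phi> t1 > 0 \<and> (\<forall>t>0. t \<noteq> t1 \<longrightarrow> \<phi> t < \<phi> t1))
       \<and> (\<exists>R1 R2. 0 < R1 \<and> R1 < R2 \<and> \<phi> R1 = 0 \<and> \<phi> R2 = 0 \<and>
             (\<forall>t>0. \<phi> t > 0 \<longleftrightarrow> R1 < t \<and> t < R2))"
proof -
  obtain R1 R2 where "0 < R1" "R1 < R2" and \<phi>_zeros: "\<phi> R1 = 0" "\<phi> R2 = 0"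
    and \<phi>_pos: "\<And>t. 0 < t \<Longrightarrow> 0 < \<phi> t \<longleftrightarrow> R1 < t \<and> t < R2"
    and \<phi>_neg: "\<And>t. 0 < t \<Longrightarrow> t < R1 \<Longrightarrow> \<phi> t < 0"
    by (rule powr_trinomial_sign[OF A B D \<beta> \<alpha> below_peak, folded \<phi>_def]) (rule that)
  obtain s1 s2 where "0 < s1" "s1 < s2" and monotone:
    "\<And>x y. 0 < x \<Longrightarrow> x < y \<Longrightarrow> y \<le> s1 \<Longrightarrow> \<phi> y < \<phi> x"
    "\<And>x y. s1 \<le> x \<Longrightarrow> x < y \<Longrightarrow> y \<le> s2 \<Longrightarrow> \<phi> x < \<phi> y"
    "\<And>x y. s2 \<le> x \<Longrightarrow> x < y \<Longrightarrow> \<phi> y < \<phi> x"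
    by (rule powr_trinomial_monotone[OF A B D \<beta> \<alpha> below_peak, folded \<phi>_def]) (rule that)
  have "0 < (R1 + R2) / 2" "0 < \<phi> ((R1 + R2) / 2)"
    using \<phi>_pos \<open>0 < R1\<close> \<open>R1 < R2\<close> by auto
  note extrema = decreasing_increasing_decreasing_extrema[where f = \<phi>,
      OF \<open>0 < s1\<close> \<open>s1 < s2\<close> monotone \<open>0 < R1\<close> \<phi>_neg this]
  show ?thesis
  proof (intro conjI)
    show "\<exists>t0>0. \<phi> t0 < 0 \<and> (\<exists>\<delta>>0. \<forall>t. t > 0 \<and> \<bar>t - t0\<bar> < \<delta> \<and> t \<noteq> t0 \<longrightarrow> \<phi> t > \<phi> t0)"
      using extrema(1,2) \<open>0 < s1\<close> \<open>s1 < s2\<close> by (intro exI[of _ s1] conjI exI[of _ "s2 - s1"]) auto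
    show "\<exists>t1>0. \<phi> t1 > 0 \<and> (\<forall>t>0. t \<noteq> t1 \<longrightarrow> \<phi> t < \<phi> t1)"
      using extrema(3,4) \<open>0 < s1\<close> \<open>s1 < s2\<close> by (intro exI[of _ s2]) auto
    show "\<exists>R1 R2. 0 < R1 \<and> R1 < R2 \<and> \<phi> R1 = 0 \<and> \<phi> R2 = 0 \<and> (\<forall>t>0. \<phi> t > 0 \<longleftrightarrow> R1 < t \<and> t < R2)"
      using \<open>0 < R1\<close> \<open>R1 < R2\<close> \<phi>_zeros \<phi>_pos by blast
  qed
qed

lemma gamma_p_bounds:
  fixes N :: nat and p :: real
  assumes "0 < N" "N \<le> 3" "2 + 8 / real N < p" "N = 3 \<longrightarrow> p < 6"
  shows "0 < gamma_p N p" "gamma_p N p < 1" "2 < p * gamma_p N p"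
proof -
  consider "N = 1" "10 < p" | "N = 2" "6 < p" | "N = 3" "14 / 3 < p" "p < 6"
  proof -
    have "N = 1 \<or> N = 2 \<or> N = 3" using assms(1,2) by auto
    then show ?thesis using assms(3,4) that by auto
  qed
  then have "0 < gamma_p N p \<and> gamma_p N p < 1 \<and> 2 < p * gamma_p N p"
    unfolding gamma_p_def by cases (simp_all add: field_simps)
  then show "0 < gamma_p N p" "gamma_p N p < 1" "2 < p * gamma_p N p" by simp_all
qed

lemma Lp_norm_pos:
  fixes h :: "'a::euclidean_space \<Rightarrow> real"
  assumes r: "r > 0" and hLp: "in_Lp r h" and hc: "\<And>x. isCont h x" and nz: "h \<noteq> (\<lambda>_. 0)"
  shows "Lp_norm r h > 0"
proof -
  obtain x0 where x0: "h x0 \<noteq> 0" using nz by auto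
  define v where "v = \<bar>h x0\<bar>"
  have v: "v > 0" using x0 unfolding v_def by simp
  obtain d where d: "d > 0" "\<forall>x. dist x x0 < d \<longrightarrow> dist (h x) (h x0) < v/2"
    using hc[of x0] v unfolding continuous_at_eps_delta by (metis half_gt_zero)
  define m where "m = (v/2) powr r"
  have m: "m > 0" using v unfolding m_def by simp
  have le: "m * indicator (ball x0 d) x \<le> \<bar>h x\<bar> powr r" for x
  proof (cases "x \<in> ball x0 d")
    case True
    then have "dist x x0 < d" by (simp add: dist_commute)
    then have "dist (h x) (h x0) < v/2" using d by blast
    then have "v/2 \<le> \<bar>h x\<bar>" unfolding v_def dist_real_def by linarith
    then have "m \<le> \<bar>h x\<bar> powr r" unfolding m_def using v r by (intro powr_mono2) auto
    then show ?thesis using True by simp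
  next
    case False then show ?thesis by simp
  qed
  have int1: "integrable lborel (\<lambda>x. m * indicator (ball x0 d) x :: real)"
    by (intro integrable_mult_right integrable_real_indicator) (use emeasure_lborel_ball_finite in auto)
  have int2: "integrable lborel (\<lambda>x. \<bar>h x\<bar> powr r)" using hLp unfolding in_Lp_def by simp
  have "(\<integral>x. m * indicator (ball x0 d) x \<partial>lborel) \<le> (\<integral>x. \<bar>h x\<bar> powr r \<partial>lborel)"
    by (rule integral_mono[OF int1 int2 le])
  moreover have "(\<integral>x. m * indicator (ball x0 d) x \<partial>lborel) = m * measure lborel (ball x0 d)"
    by simp
  moreover have "m * measure lborel (ball x0 d) > 0" using m d content_ball_pos[of d x0] by simp
  ultimately have "(\<integral>x. \<bar>h x\<bar> powr r \<partial>lborel) > 0" by linarith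
  then show ?thesis unfolding Lp_norm_def by simp
qed

lemma GN_smallness_below_peak:
  fixes a c p q \<gamma> Cp Cq hn :: real
  assumes a: "0 < a" and c: "0 < c" and Cp: "0 < Cp" and Cq: "0 < Cq"
    and q: "0 < q" "q < p" and \<gamma>: "0 < \<gamma>" "2 < p * \<gamma>" "q * \<gamma> < 2"
    and small: "hn < a * q * (p * \<gamma> - 2) / (2 * Cq * \<gamma> * (p - q))
        * (a * p * (2 - q * \<gamma>) / (2 * \<gamma> * (p - q) * Cp)) powr ((2 - q * \<gamma>) / (p * \<gamma> - 2))
        * c powr (- ((1 - \<gamma>) * (p - q) / (p * \<gamma> - 2)))"
  shows "1 / q * Cq * c powr (q * (1 - \<gamma>) / 2) * hn
    < (p * \<gamma> - 2) / (p * \<gamma> - q * \<gamma>) * (a / 2)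
      * ((2 - q * \<gamma>) * (a / 2) / ((p * \<gamma> - q * \<gamma>) * (1 / p * Cp * c powr ((p - p * \<gamma>) / 2))))
        powr ((2 - q * \<gamma>) / (p * \<gamma> - 2))"
proof -
  define X where "X = a * p * (2 - q * \<gamma>) / (2 * \<gamma> * (p - q) * Cp)"
  define e where "e = (2 - q * \<gamma>) / (p * \<gamma> - 2)"
  define E where "E = (1 - \<gamma>) * (p - q) / (p * \<gamma> - 2)"
  have "0 < p" using q by linarith
  have "0 < X" unfolding X_def using a \<open>0 < p\<close> q \<gamma> Cp by simp
  have ratio: "(2 - q * \<gamma>) * (a / 2) / ((p * \<gamma> - q * \<gamma>) * (1 / p * Cp * c powr ((p - p * \<gamma>) / 2)))
      = X * c powr (- ((p - p * \<gamma>) / 2))"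
    unfolding X_def powr_minus using c Cp \<gamma> q \<open>0 < p\<close> by (simp add: field_simps)
  have exponent: "q * (1 - \<gamma>) / 2 + - E = - ((p - p * \<gamma>) / 2) * e"
    unfolding E_def e_def using \<gamma> by (simp add: field_simps)
  have "1 / q * Cq * c powr (q * (1 - \<gamma>) / 2) * hn
      < 1 / q * Cq * c powr (q * (1 - \<gamma>) / 2)
        * (a * q * (p * \<gamma> - 2) / (2 * Cq * \<gamma> * (p - q)) * X powr e * c powr (- E))"
    using small q Cq c unfolding X_def e_def E_def by (intro mult_strict_left_mono) simp_all
  also have "\<dots> = (p * \<gamma> - 2) / (p * \<gamma> - q * \<gamma>) * (a / 2) * X powr e
      * (c powr (q * (1 - \<gamma>) / 2) * c powr (- E))"
  proof -
    have "p * \<gamma> - q * \<gamma> = \<gamma> * (p - q)" by (simp add: algebra_simps)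
    moreover have "q \<noteq> 0" "Cq \<noteq> 0" "\<gamma> \<noteq> 0" "p - q \<noteq> 0" using q Cq \<gamma> by auto
    ultimately show ?thesis by (simp add: field_simps)
  qed
  also have "\<dots> = (p * \<gamma> - 2) / (p * \<gamma> - q * \<gamma>) * (a / 2)
      * (X * c powr (- ((p - p * \<gamma>) / 2))) powr e"
    unfolding powr_add[symmetric] exponent using \<open>0 < X\<close> c by (simp add: powr_mult powr_powr)
  finally show ?thesis unfolding ratio e_def .
qed

theorem lemma3p4:
  fixes h :: "real^'n \<Rightarrow> real" and gh :: "real^'n \<Rightarrow> real^'n"
    and a c p q :: real
  defines "\<gamma> \<equiv> gamma_p CARD('n) p"
    and "C \<equiv> GN_const TYPE('n) p"
    and "hn \<equiv> Lp_norm (p / (p - q)) h"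
  defines "\<phi> \<equiv> (\<lambda>t::real. a / 2 * t\<^sup>2 - 1 / p * C powr p * c powr ((p - p * \<gamma>) / 2) * t powr (p * \<gamma>)
                  - 1 / q * C powr q * c powr (q * (1 - \<gamma>) / 2) * hn * t powr (q * \<gamma>))"
  assumes N: "CARD('n) \<le> 3"
    and a: "a > 0" and c: "c > 0"
    and q: "1 \<le> q" "q < 2"
    and p: "2 + 8 / real CARD('n) < p" "CARD('n) = 3 \<longrightarrow> p < 6"
    and hLp: "in_Lp (p / (p - q)) h"
    and hC1: "continuous_on UNIV gh" "\<forall>x. (h has_derivative (\<lambda>v. gh x \<bullet> v)) (at x)"
    and hnn: "\<forall>x. h x \<ge> 0"
    and hnz: "h \<noteq> (\<lambda>_. 0)"
    and hgrad: "in_Lp (2 / (2 - q)) (\<lambda>x. gh x \<bullet> x)"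
    and hsmall: "hn < a * q * (p * \<gamma> - 2) / (2 * C powr q * \<gamma> * (p - q))
        * (a * p * (2 - q * \<gamma>) / (2 * \<gamma> * (p - q) * C powr p)) powr ((2 - q * \<gamma>) / (p * \<gamma> - 2))
        * c powr (- ((1 - \<gamma>) * (p - q) / (p * \<gamma> - 2)))"
  shows "(\<exists>t0>0. \<phi> t0 < 0 \<and> (\<exists>\<delta>>0. \<forall>t. t > 0 \<and> \<bar>t - t0\<bar> < \<delta> \<and> t \<noteq> t0 \<longrightarrow> \<phi> t > \<phi> t0))
       \<and> (\<exists>t1>0. \<phi> t1 > 0 \<and> (\<forall>t>0. t \<noteq> t1 \<longrightarrow> \<phi> t < \<phi> t1))
       \<and> (\<exists>R1 R2. 0 < R1 \<and> R1 < R2 \<and> \<phi> R1 = 0 \<and> \<phi> R2 = 0 \<and>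
             (\<forall>t>0. \<phi> t > 0 \<longleftrightarrow> R1 < t \<and> t < R2))"
proof -
  have \<gamma>: "0 < \<gamma>" "\<gamma> < 1" "2 < p * \<gamma>"
    unfolding \<gamma>_def using gamma_p_bounds[OF _ N p] by simp_all
  have "0 < 8 / real CARD('n)" by simp
  then have "q < p" using p(1) q by linarith
  have "q * \<gamma> < 2 * \<gamma>" using q \<gamma> by simp
  then have "q * \<gamma> < 2" using \<gamma>(2) by linarith
  have "0 < q * \<gamma>" using \<gamma> q by simp
  \<comment> \<open>h enters only through 0 < hn\<close>
  have "isCont h x" for x
    using hC1(2) has_derivative_continuous by blast
  then have "0 < hn"
    unfolding hn_def using \<open>q < p\<close> q by (intro Lp_norm_pos[OF _ hLp _ hnz]) auto
  then have "C \<noteq> 0" using hsmall by auto \<comment> \<open>C = 0 makes the bound in hsmall zero\<close>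
  then have "0 < C powr p" "0 < C powr q" by simp_all
  moreover have "0 < q" using q(1) by simp
  ultimately have below_peak: "1 / q * C powr q * c powr (q * (1 - \<gamma>) / 2) * hn
    < (p * \<gamma> - 2) / (p * \<gamma> - q * \<gamma>) * (a / 2)
      * ((2 - q * \<gamma>) * (a / 2) / ((p * \<gamma> - q * \<gamma>) * (1 / p * C powr p * c powr ((p - p * \<gamma>) / 2))))
        powr ((2 - q * \<gamma>) / (p * \<gamma> - 2))"
    using GN_smallness_below_peak[OF a c _ _ _ \<open>q < p\<close> \<gamma>(1,3) \<open>q * \<gamma> < 2\<close> hsmall] by blast
  show ?thesis
    using powr_trinomial_shape[OF _ _ _ \<open>0 < q * \<gamma>\<close> \<open>q * \<gamma> < 2\<close> \<gamma>(3) below_peak]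
      a c \<open>0 < q\<close> \<open>q < p\<close> \<open>0 < hn\<close> \<open>0 < C powr p\<close> \<open>0 < C powr q\<close>
    unfolding \<phi>_def powr_trinomial_def[abs_def] by simp
qed

end
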